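(* Let ${\mathbf{b}} \in \{A{\mathbf{z}} : {\mathbf{z}} \ge 0\}$ and suppose there exist $$\widetilde{{\mathbf{x}}}^* \in \operatorname{argmin}_{{\mathbf{x}} \geq 0} \|{\mathbf{x}}\|_0 \quad\text{subject to}\quad A{\mathbf{x}} = {\mathbf{b}}$$ and a vector ${\mathbf{c}}$ such that, with $\mathcal{J} = \mathrm{supp}(\widetilde{{\mathbf{x}}}^* )$, $$\frac{P {\mathbf{e}}_j}{\| P {\mathbf{e}}_j \|_2} \cdot {\mathbf{c}} = 1 \ \ \forall j \in \mathcal{J}, \qquad \frac{P {\mathbf{e}}_i}{\| P {\mathbf{e}}_i \|_2} \cdot {\mathbf{c}} < 1 \ \ \forall i \in \mathcal{J}^c.$$ Then for every $s \in [\|\widetilde{{\mathbf{x}}}^*\|_\infty, \infty]$, every solution ${\mathbf{y}}$ of $$\min_{0 \leq {\mathbf{x}} \leq s} \| W {\mathbf{x}} \|_1 \quad \text{subject to} \quad A {\mathbf{x}} = {\mathbf{b}}$$ also solves $\min_{0 \leq {\mathbf{x}} \leq s} \|{\mathbf{x}}\|_0$ subject to $A{\mathbf{x}} = {\mathbf{b}}$, and $\mathrm{supp}({\mathbf{y}}) = \mathrm{supp}(\widetilde{{\mathbf{x}}}^* )$.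
   Context: $A \in \mathbb{R}^{m\times n}$ is a matrix, $A^\dagger$ its Moore–Penrose pseudoinverse, and $P = A^\dagger A$ the orthogonal projection onto $\mathcal{N}(A)^\perp$. ${\mathbf{e}}_1,\dots,{\mathbf{e}}_n$ are the standard unit vectors, assumed not to lie in $\mathcal{N}(A)$, so $w_i := \|P{\mathbf{e}}_i\|_2 > 0$; $W = \mathrm{diag}(w_1,\dots,w_n)$. $\|{\mathbf{v}}\|_0 = \#\{i : v_i \neq 0\}$. Inequalities are componentwise; $s=\infty$ means only ${\mathbf{x}}\ge 0$. *)

theory Defs
  imports "HOL-Analysis.Analysis" "HOL-Library.Extended_Real"
begin

definition penrose :: "real^'n^'m \<Rightarrow> real^'m^'n \<Rightarrow> bool" where
  "penrose A X \<longleftrightarrow> A ** X ** A = A \<and> X ** A ** X = X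
     \<and> transpose (A ** X) = A ** X \<and> transpose (X ** A) = X ** A"

definition pinv :: "real^'n^'m \<Rightarrow> real^'m^'n" where
  "pinv A = (THE X. penrose A X)"

definition projP :: "real^'n^'m \<Rightarrow> real^'n^'n" where
  "projP A = pinv A ** A"

definition wgt :: "real^'n^'m \<Rightarrow> 'n \<Rightarrow> real" where
  "wgt A i = norm (projP A *v axis i 1)"

definition wl1 :: "real^'n^'m \<Rightarrow> real^'n \<Rightarrow> real" where
  "wl1 A x = (\<Sum>i\<in>UNIV. \<bar>wgt A i * x $ i\<bar>)"

definition supp :: "real^'n \<Rightarrow> 'n set" where
  "supp x = {i. x $ i \<noteq> 0}"

definition l0 :: "real^'n \<Rightarrow> nat" where
  "l0 x = card (supp x)"

definition linf :: "real^'n \<Rightarrow> real" where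
  "linf x = Max (range (\<lambda>i. \<bar>x $ i\<bar>))"

text \<open>Feasible set {x : 0 <= x <= s, A x = b}; s = \<infinity> gives only x >= 0.\<close>
definition feas :: "real^'n^'m \<Rightarrow> real^'m \<Rightarrow> ereal \<Rightarrow> real^'n \<Rightarrow> bool" where
  "feas A b s x \<longleftrightarrow> (\<forall>i. 0 \<le> x $ i \<and> ereal (x $ i) \<le> s) \<and> A *v x = b"

end

theory Submission
  imports Defs
begin

text \<open>
  The vector \<open>d = P c\<close> is a dual certificate for the weighted \<open>\<ell>\<^sub>1\<close> problem. Since \<open>P = A\<^sup>+ A\<close>
  is symmetric, \<open>d \<bullet> x = c \<bullet> P x = c \<bullet> A\<^sup>+ b\<close> for every \<open>x\<close> with \<open>A x = b\<close>, so for feasible \<open>x \<ge> 0\<close>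
  \<open>\<parallel>W x\<parallel>\<^sub>1 = c \<bullet> A\<^sup>+ b + \<Sum>\<^sub>i (w\<^sub>i - d\<^sub>i) x\<^sub>i\<close>. The hypotheses on \<open>c\<close> say that the slacks \<open>w\<^sub>i - d\<^sub>i\<close>
  vanish on \<open>J\<close> and are positive off \<open>J\<close>. Hence \<open>x\<^sup>*\<close> attains the lower bound \<open>c \<bullet> A\<^sup>+ b\<close>, every
  weighted \<open>\<ell>\<^sub>1\<close> minimizer attains it as well and is therefore supported in \<open>J\<close>, and the
  \<open>\<ell>\<^sub>0\<close>-minimality of \<open>x\<^sup>*\<close> forces the supports to coincide.

  Reading the hypotheses as \<open>d\<^sub>i = w\<^sub>i\<close> and \<open>d\<^sub>i < w\<^sub>i\<close> needs \<open>w\<^sub>i > 0\<close>, i.e. \<open>A A\<^sup>+ A = A\<close>, so the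
  Penrose equations must be shown solvable; a solution is built from the orthogonal projections
  onto the column space and the row space of \<open>A\<close>.
\<close>

lemma transpose_eq_if_self_adjoint:
  fixes M :: "real^'n^'n"
  assumes "\<And>x y. (M *v x) \<bullet> y = x \<bullet> (M *v y)"
  shows "transpose M = M"
proof -
  have "(\<lambda>x. transpose M *v x) = (\<lambda>x. M *v x)"
    using adjoint_matrix[of M] adjoint_unique[of "\<lambda>x. M *v x" "\<lambda>x. M *v x"] assms by simp
  then show ?thesis
    by (simp add: matrix_eq fun_eq_iff)
qed

definition orthogonal_projection :: "real^'k^'k \<Rightarrow> (real^'k) set \<Rightarrow> bool" where
  "orthogonal_projection P V \<longleftrightarrow> (\<forall>x. P *v x \<in> V \<and> (\<forall>w\<in>V. orthogonal (x - P *v x) w))"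

lemma orthogonal_projection_exists:
  fixes V :: "(real^'k) set"
  assumes "subspace V"
  shows "\<exists>P. orthogonal_projection P V"
proof -
  obtain T where T: "T \<subseteq> V" "pairwise orthogonal T" "span T = V"
    using orthogonal_basis_subspace[OF assms] by metis
  define f where "f = (\<lambda>x::real^'k. \<Sum>t\<in>T. (t \<bullet> x / (t \<bullet> t)) *\<^sub>R t)"
  have "linear f"
    unfolding f_def
    by (rule linearI)
      (simp_all add: inner_add_right add_divide_distrib scaleR_add_left sum.distrib scaleR_sum_right)
  then have f: "matrix f *v x = f x" for x
    by simp
  have "f x \<in> V" for x
    unfolding f_def using T(1) assms by (intro subspace_sum subspace_scale) auto
  moreover have "orthogonal (x - f x) w" if "w \<in> V" for x w
    using Gram_Schmidt_step[OF T(2), of w x] that T(3)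
    by (simp add: f_def orthogonal_commute)
  ultimately have "orthogonal_projection (matrix f) V"
    unfolding orthogonal_projection_def f by blast
  then show ?thesis ..
qed

lemma orthogonal_projection_fixes:
  assumes "orthogonal_projection P V" "subspace V" "x \<in> V"
  shows "P *v x = x"
proof -
  have "x - P *v x \<in> V"
    using assms by (simp add: orthogonal_projection_def subspace_diff)
  then have "orthogonal (x - P *v x) (x - P *v x)"
    using assms(1) by (simp add: orthogonal_projection_def)
  then show ?thesis
    by (simp add: orthogonal_self)
qed

lemma orthogonal_projection_symmetric:
  assumes "orthogonal_projection P V"
  shows "transpose P = P"
proof (rule transpose_eq_if_self_adjoint)
  fix x y
  have "(P *v x) \<bullet> (y - P *v y) = 0" "(x - P *v x) \<bullet> (P *v y) = 0"
    using assms by (auto simp: orthogonal_projection_def orthogonal_def inner_commute)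
  then show "(P *v x) \<bullet> y = x \<bullet> (P *v y)"
    by (simp add: inner_diff)
qed

lemma subspace_range_matrix_vector_mult:
  fixes A :: "real^'n^'m"
  shows "subspace (range (\<lambda>x. A *v x))"
  by (rule linear_subspace_image[OF matrix_vector_mul_linear subspace_UNIV])

lemma matrix_vector_mult_eq_0_iff_orthogonal_row_space:
  fixes A :: "real^'n^'m"
  shows "A *v v = 0 \<longleftrightarrow> (\<forall>w\<in>range (\<lambda>u. transpose A *v u). orthogonal v w)"
proof -
  have orth: "orthogonal v (u v* A) \<longleftrightarrow> u \<bullet> (A *v v) = 0" for u
    unfolding orthogonal_def by (metis dot_lmul_matrix inner_commute)
  have "(\<forall>u. u \<bullet> (A *v v) = 0) \<longleftrightarrow> A *v v = 0"
    by (metis inner_eq_zero_iff inner_zero_right)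
  then show ?thesis
    by (simp add: orth)
qed

lemma matrix_vector_mult_orthogonal_projection_row_space:
  fixes A :: "real^'n^'m"
  assumes "orthogonal_projection P (range (\<lambda>u. transpose A *v u))"
  shows "A *v (P *v v) = A *v v"
proof -
  have "A *v (v - P *v v) = 0"
    using assms unfolding matrix_vector_mult_eq_0_iff_orthogonal_row_space orthogonal_projection_def
    by blast
  then show ?thesis
    by (simp add: matrix_vector_mult_diff_distrib)
qed

lemma row_space_linear_left_inverse:
  fixes A :: "real^'n^'m"
  obtains g where "linear g" "\<And>v. v \<in> range (\<lambda>u. transpose A *v u) \<Longrightarrow> g (A *v v) = v"
proof -
  let ?R = "range (\<lambda>u. transpose A *v u)"
  have R: "subspace ?R"
    by (rule subspace_range_matrix_vector_mult)
  then have span_R: "span ?R = ?R"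
    by (rule span_eq_iff[THEN iffD2])
  have "inj_on (\<lambda>v. A *v v) ?R"
    unfolding linear_inj_on_iff_eq_0[OF matrix_vector_mul_linear R]
    using matrix_vector_mult_eq_0_iff_orthogonal_row_space[of A] orthogonal_self by blast
  then show ?thesis
    using that linear_inj_on_left_inverse[of "\<lambda>v. A *v v" ?R, unfolded span_R] by blast
qed

lemma penrose_exists:
  fixes A :: "real^'n^'m"
  shows "\<exists>X. penrose A X"
proof -
  let ?C = "range (\<lambda>v. A *v v)" and ?R = "range (\<lambda>u. transpose A *v u)"
  have C: "subspace ?C" and R: "subspace ?R"
    by (rule subspace_range_matrix_vector_mult)+
  obtain PC where PC: "orthogonal_projection PC ?C"
    using orthogonal_projection_exists[OF C] by blast
  obtain PR where PR: "orthogonal_projection PR ?R"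
    using orthogonal_projection_exists[OF R] by blast
  obtain g where g: "linear g" "\<And>v. v \<in> ?R \<Longrightarrow> g (A *v v) = v"
    using row_space_linear_left_inverse[of A] by blast
  have PR_R: "PR *v v \<in> ?R" for v
    using PR unfolding orthogonal_projection_def by blast
  have A_PR: "A *v (PR *v v) = A *v v" for v
    by (rule matrix_vector_mult_orthogonal_projection_row_space[OF PR])
  have PC_A: "PC *v (A *v v) = A *v v" for v
    using orthogonal_projection_fixes[OF PC C] by blast
  \<comment> \<open>Undo \<open>A\<close> on its row space after projecting onto its column space; then \<open>A X = P\<^sub>C\<close>, \<open>X A = P\<^sub>R\<close>.\<close>
  define X where "X = matrix (\<lambda>y. g (PC *v y))"
  have "linear (\<lambda>y. g (PC *v y))"
    using linear_compose[OF matrix_vector_mul_linear g(1)] by (simp add: o_def)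
  then have X: "X *v y = g (PC *v y)" for y
    by (simp add: X_def)
  have X_A: "X *v (A *v v) = PR *v v" for v
    using g(2)[OF PR_R] by (simp add: X PC_A A_PR)
  have X_PC: "X *v y \<in> ?R \<and> A *v (X *v y) = PC *v y" for y
  proof -
    obtain v where "PC *v y = A *v v"
      using PC unfolding orthogonal_projection_def by blast
    moreover have "X *v y = PR *v v"
      using X_A[of v] calculation by (simp add: X PC_A)
    ultimately show ?thesis
      using PR_R A_PR by simp
  qed
  have AX: "A ** X = PC"
    by (simp add: matrix_eq matrix_vector_mul_assoc[symmetric] X_PC)
  have XA: "X ** A = PR"
    by (simp add: matrix_eq matrix_vector_mul_assoc[symmetric] X_A)
  have "A ** X ** A = A"
    by (simp add: AX matrix_eq matrix_vector_mul_assoc[symmetric] PC_A)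
  moreover have "X ** A ** X = X"
    using orthogonal_projection_fixes[OF PR R] X_PC
    by (simp add: XA matrix_eq matrix_vector_mul_assoc[symmetric])
  ultimately have "penrose A X"
    unfolding penrose_def AX XA
    using orthogonal_projection_symmetric[OF PC] orthogonal_projection_symmetric[OF PR] by blast
  then show ?thesis ..
qed

lemma penrose_unique:
  fixes A :: "real^'n^'m"
  assumes "penrose A X" "penrose A Y"
  shows "X = Y"
proof -
  note pX = assms(1)[unfolded penrose_def] and pY = assms(2)[unfolded penrose_def]
  have At_AY: "transpose A = transpose A ** (A ** Y)"
    by (metis pY matrix_transpose_mul)
  have At_YA: "transpose A = (Y ** A) ** transpose A"
    by (metis pY matrix_transpose_mul matrix_mul_assoc)
  have AX: "A ** X = A ** Y"
  proof -
    have "A ** X = transpose X ** transpose A" by (metis pX matrix_transpose_mul)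
    also have "\<dots> = (transpose X ** transpose A) ** (A ** Y)"
      by (metis At_AY matrix_mul_assoc)
    also have "\<dots> = (A ** X) ** (A ** Y)" by (metis pX matrix_transpose_mul)
    also have "\<dots> = A ** Y" by (metis pX matrix_mul_assoc)
    finally show ?thesis .
  qed
  have XA: "X ** A = Y ** A"
  proof -
    have "X ** A = transpose A ** transpose X" by (metis pX matrix_transpose_mul)
    also have "\<dots> = (Y ** A) ** (transpose A ** transpose X)"
      by (metis At_YA matrix_mul_assoc)
    also have "\<dots> = (Y ** A) ** (X ** A)" by (metis pX matrix_transpose_mul)
    also have "\<dots> = Y ** A" by (metis pX matrix_mul_assoc)
    finally show ?thesis .
  qed
  have "X = X ** A ** X" using pX by simp
  also have "\<dots> = X ** (A ** Y)" by (metis AX matrix_mul_assoc)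
  also have "\<dots> = Y ** A ** Y" by (metis XA matrix_mul_assoc)
  also have "\<dots> = Y" using pY by simp
  finally show ?thesis .
qed

lemma penrose_pinv: "penrose A (pinv A)"
  unfolding pinv_def
  by (rule theI') (metis penrose_exists penrose_unique)

lemma projP_symmetric: "transpose (projP A) = projP A"
  using penrose_pinv[of A] by (simp add: penrose_def projP_def)

lemma matrix_vector_mult_projP: "A *v (projP A *v x) = A *v x"
  using penrose_pinv[of A]
  by (simp add: penrose_def projP_def matrix_vector_mul_assoc matrix_mul_assoc)

lemma wgt_pos:
  assumes "A *v axis i 1 \<noteq> 0"
  shows "0 < wgt A i"
  using assms matrix_vector_mult_projP[of A "axis i 1"] by (auto simp: wgt_def)

lemma projP_matrix_vector_eq_vector_matrix: "projP A *v x = x v* projP A"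
  using transpose_matrix_vector[of "projP A" x] by (simp only: projP_symmetric)

lemma inner_projP_axis: "(projP A *v axis i 1) \<bullet> c = (projP A *v c) $ i"
  by (simp add: projP_matrix_vector_eq_vector_matrix[of A "axis i 1"] dot_lmul_matrix inner_axis')

lemma inner_projP_solution:
  assumes "A *v x = b"
  shows "(projP A *v c) \<bullet> x = c \<bullet> (pinv A *v b)"
proof -
  have "(projP A *v c) \<bullet> x = c \<bullet> (projP A *v x)"
    by (simp add: projP_matrix_vector_eq_vector_matrix[of A c] dot_lmul_matrix)
  also have "projP A *v x = pinv A *v b"
    using assms by (simp add: projP_def matrix_vector_mul_assoc[symmetric])
  finally show ?thesis .
qed

lemma normalized_projP_axis_inner:
  assumes "A *v axis i 1 \<noteq> 0"
  shows "(inverse (wgt A i) *\<^sub>R (projP A *v axis i 1)) \<bullet> c = 1 \<longleftrightarrow> (projP A *v c) $ i = wgt A i"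
    and "(inverse (wgt A i) *\<^sub>R (projP A *v axis i 1)) \<bullet> c < 1 \<longleftrightarrow> (projP A *v c) $ i < wgt A i"
  using wgt_pos[OF assms] by (auto simp: inner_projP_axis field_simps)

lemma wl1_eq_certificate_plus_slack:
  assumes "A *v x = b" "\<forall>i. 0 \<le> x $ i"
  shows "wl1 A x = c \<bullet> (pinv A *v b) + (\<Sum>i\<in>UNIV. (wgt A i - (projP A *v c) $ i) * x $ i)"
proof -
  have "wl1 A x = (\<Sum>i\<in>UNIV. wgt A i * x $ i)"
    using assms(2) by (simp add: wl1_def wgt_def abs_mult)
  moreover have "(\<Sum>i\<in>UNIV. (projP A *v c) $ i * x $ i) = c \<bullet> (pinv A *v b)"
    using inner_projP_solution[OF assms(1)] by (simp add: inner_vec_def)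
  ultimately show ?thesis
    by (simp add: left_diff_distrib sum_subtractf)
qed

lemma weighted_sum_le_0_iff_supp_subset:
  fixes x :: "real^'n"
  assumes "\<forall>i. 0 \<le> \<sigma> i" "\<forall>i. 0 \<le> x $ i"
  shows "(\<Sum>i\<in>UNIV. \<sigma> i * x $ i) \<le> 0 \<longleftrightarrow> supp x \<subseteq> {i. \<sigma> i = 0}"
proof -
  have "\<forall>i\<in>UNIV. 0 \<le> \<sigma> i * x $ i"
    using assms by simp
  then have "(\<Sum>i\<in>UNIV. \<sigma> i * x $ i) \<le> 0 \<longleftrightarrow> (\<forall>i. \<sigma> i * x $ i = 0)"
    using sum_nonneg_eq_0_iff[of UNIV "\<lambda>i. \<sigma> i * x $ i"] sum_nonneg[of UNIV] by force
  then show ?thesis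
    by (auto simp: supp_def)
qed

lemma feas_if_linf_le:
  assumes "\<forall>i. 0 \<le> x $ i" "A *v x = b" "ereal (linf x) \<le> s"
  shows "feas A b s x"
proof -
  have "x $ i \<le> linf x" for i
    unfolding linf_def by (rule order_trans[OF abs_ge_self]) (rule Max_ge, auto)
  then have "ereal (x $ i) \<le> s" for i
    using assms(3) order_trans ereal_less_eq(3) by meson
  then show ?thesis
    using assms(1,2) by (simp add: feas_def)
qed

lemma l0_arg_min_if_supp_subset:
  assumes x: "is_arg_min l0 Q x" and "F y" "supp y \<subseteq> supp x" "\<And>z. F z \<Longrightarrow> Q z"
  shows "is_arg_min l0 F y \<and> supp y = supp x"
proof -
  have "l0 x \<le> l0 y"
    using assms by (simp add: is_arg_min_linorder)
  then have supp_eq: "supp y = supp x"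
    using assms(3) by (simp add: l0_def card_seteq)
  moreover have "l0 y \<le> l0 z" if "F z" for z
    using x assms(4)[OF that] supp_eq by (simp add: is_arg_min_linorder l0_def)
  ultimately show ?thesis
    using assms(2) by (simp add: is_arg_min_linorder)
qed

theorem corollary2:
  fixes A :: "real^'n^'m" and b :: "real^'m" and xs :: "real^'n" and c :: "real^'n"
  assumes not_null: "\<forall>i. A *v axis i 1 \<noteq> 0"
    and b_cone: "\<exists>z. (\<forall>i. 0 \<le> z $ i) \<and> A *v z = b"
    and xs_min: "is_arg_min l0 (\<lambda>x. (\<forall>i. 0 \<le> x $ i) \<and> A *v x = b) xs"
    and c_on: "\<forall>j\<in>supp xs. (inverse (wgt A j) *\<^sub>R (projP A *v axis j 1)) \<bullet> c = 1"
    and c_off: "\<forall>i\<in>- supp xs. (inverse (wgt A i) *\<^sub>R (projP A *v axis i 1)) \<bullet> c < 1"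
  shows "\<forall>s::ereal. ereal (linf xs) \<le> s \<longrightarrow>
           (\<forall>y. is_arg_min (wl1 A) (feas A b s) y \<longrightarrow>
                is_arg_min l0 (feas A b s) y \<and> supp y = supp xs)"
proof (intro allI impI)
  fix s :: ereal and y
  assume s: "ereal (linf xs) \<le> s" and y_min: "is_arg_min (wl1 A) (feas A b s) y"
  define \<sigma> where "\<sigma> i = wgt A i - (projP A *v c) $ i" for i
  have \<sigma>: "0 \<le> \<sigma> i \<and> (\<sigma> i = 0 \<longleftrightarrow> i \<in> supp xs)" for i
    using c_on c_off normalized_projP_axis_inner[OF not_null[rule_format, of i], of c]
    by (cases "i \<in> supp xs") (auto simp: \<sigma>_def)
  have xs: "\<forall>i. 0 \<le> xs $ i" "A *v xs = b"
    using xs_min by (simp_all add: is_arg_min_def)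
  have y: "feas A b s y" "\<forall>i. 0 \<le> y $ i" "A *v y = b"
    using y_min by (simp_all add: is_arg_min_def feas_def)
  have "wl1 A y \<le> wl1 A xs"
    using y_min feas_if_linf_le[OF xs s] by (simp add: is_arg_min_linorder)
  then have "(\<Sum>i\<in>UNIV. \<sigma> i * y $ i) \<le> (\<Sum>i\<in>UNIV. \<sigma> i * xs $ i)"
    using wl1_eq_certificate_plus_slack[OF y(3,2), of c] wl1_eq_certificate_plus_slack[OF xs(2,1), of c]
    by (simp add: \<sigma>_def)
  also have "\<dots> \<le> 0"
    using weighted_sum_le_0_iff_supp_subset[OF _ xs(1)] \<sigma> by auto
  finally have "supp y \<subseteq> supp xs"
    using weighted_sum_le_0_iff_supp_subset[OF _ y(2)] \<sigma> by auto
  from l0_arg_min_if_supp_subset[where F = "feas A b s", OF xs_min y(1) this]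
  show "is_arg_min l0 (feas A b s) y \<and> supp y = supp xs"
    by (simp add: feas_def)
qed

end
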